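(* Let $A$ be a commutative ring and $\sigma$ a hereditary torsion theory on $A$-modules such that $A$ is $\sigma$-artinian. Then $\mathcal{K}(\sigma)$ is a finite set.
   Context: $\mathcal{L}(\sigma)$ is the Gabriel filter of $\sigma$. $A$ is $\sigma$-artinian if for every descending chain of ideals $\mathfrak{a}_1\supseteq\mathfrak{a}_2\supseteq\cdots$ there is an index $m$ such that for every $s\ge m$ the module $\mathfrak{a}_m/\mathfrak{a}_s$ is $\sigma$-torsion (i.e. for each $x\in\mathfrak{a}_m$ there is $\mathfrak{h}\in\mathcal{L}(\sigma)$ with $x\mathfrak{h}\subseteq\mathfrak{a}_s$). $\mathcal{K}(\sigma)$ is the set of prime ideals $\mathfrak{p}$ of $A$ with $\mathfrak{p}\notin\mathcal{L}(\sigma)$. *)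

theory Defs
  imports "HOL-Algebra.Algebra"
begin

definition colon_ideal :: "('a, 'b) ring_scheme \<Rightarrow> 'a set \<Rightarrow> 'a \<Rightarrow> 'a set" where
  "colon_ideal R I a = {x \<in> carrier R. a \<otimes>\<^bsub>R\<^esub> x \<in> I}"

text \<open>Hereditary torsion theories sigma on R-modules correspond bijectively to such filters
  L(sigma); we represent sigma by its Gabriel filter.\<close>
definition gabriel_filter :: "('a, 'b) ring_scheme \<Rightarrow> 'a set set \<Rightarrow> bool" where
  "gabriel_filter R F \<longleftrightarrow>
     (\<forall>I\<in>F. ideal I R) \<and>
     carrier R \<in> F \<and>
     (\<forall>I J. I \<in> F \<and> ideal J R \<and> I \<subseteq> J \<longrightarrow> J \<in> F) \<and>
     (\<forall>I\<in>F. \<forall>a\<in>carrier R. colon_ideal R I a \<in> F) \<and>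
     (\<forall>I J. I \<in> F \<and> ideal J R \<and> (\<forall>a\<in>I. colon_ideal R J a \<in> F) \<longrightarrow> J \<in> F)"

definition sigma_artinian :: "('a, 'b) ring_scheme \<Rightarrow> 'a set set \<Rightarrow> bool" where
  "sigma_artinian R F \<longleftrightarrow>
     (\<forall>\<aa> :: nat \<Rightarrow> 'a set.
        (\<forall>n. ideal (\<aa> n) R) \<and> (\<forall>n. \<aa> (Suc n) \<subseteq> \<aa> n) \<longrightarrow>
        (\<exists>m. \<forall>s\<ge>m. \<forall>x\<in>\<aa> m. \<exists>h\<in>F. \<forall>y\<in>h. x \<otimes>\<^bsub>R\<^esub> y \<in> \<aa> s))"

definition K_sigma :: "('a, 'b) ring_scheme \<Rightarrow> 'a set set \<Rightarrow> 'a set set" where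
  "K_sigma R F = {p. primeideal p R \<and> p \<notin> F}"

end

theory Submission
  imports Defs
begin

text \<open>Two consequences of the descending chain condition modulo \<open>\<sigma>\<close>-torsion make
  \<open>\<K>(\<sigma>)\<close> finite. First, its members are pairwise incomparable: if \<open>p \<subset> q\<close> and
  \<open>x \<in> q - p\<close>, the chain \<open>x\<^sup>n A + p\<close> stabilises modulo torsion, so \<open>x\<^sup>m z \<in> x\<^sup>m\<^sup>+\<^sup>1 A + p\<close>
  for some \<open>z \<notin> q\<close>, which forces \<open>z \<in> x A + p \<subseteq> q\<close>. Second, for any sequence
  \<open>p\<^sub>0, p\<^sub>1, \<dots>\<close> in \<open>\<K>(\<sigma>)\<close> the chain \<open>p\<^sub>0 \<inter> \<dots> \<inter> p\<^sub>n\<^sub>-\<^sub>1\<close> stabilises, which yields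
  \<open>p\<^sub>0 \<inter> \<dots> \<inter> p\<^sub>m\<^sub>-\<^sub>1 \<subseteq> p\<^sub>m\<close> for some \<open>m\<close>; by prime avoidance some \<open>p\<^sub>i \<subseteq> p\<^sub>m\<close> with
  \<open>i < m\<close>, so the sequence cannot be injective.\<close>

lemma gabriel_filter_ideal: "gabriel_filter R F \<Longrightarrow> I \<in> F \<Longrightarrow> ideal I R"
  unfolding gabriel_filter_def by blast

lemma gabriel_filter_superset:
  "gabriel_filter R F \<Longrightarrow> I \<in> F \<Longrightarrow> ideal J R \<Longrightarrow> I \<subseteq> J \<Longrightarrow> J \<in> F"
  unfolding gabriel_filter_def by blast

lemma gabriel_filter_not_subset:
  assumes "gabriel_filter R F" "h \<in> F" "ideal p R" "p \<notin> F"
  obtains z where "z \<in> h" "z \<notin> p"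
  using gabriel_filter_superset[OF assms(1,2,3)] assms(4) by blast

lemma primeideal_torsion_closed:
  fixes R (structure)
  assumes gf: "gabriel_filter R F" and p: "primeideal p R" "p \<notin> F"
    and h: "h \<in> F" and y: "y \<in> carrier R" and yh: "\<forall>z\<in>h. y \<otimes> z \<in> p"
  shows "y \<in> p"
proof -
  interpret primeideal p R by fact
  obtain z where z: "z \<in> h" "z \<notin> p"
    using gabriel_filter_not_subset[OF gf h is_ideal p(2)] .
  have "z \<in> carrier R"
    using ideal.Icarr[OF gabriel_filter_ideal[OF gf h] z(1)] .
  then show ?thesis using I_prime[OF y] yh z by blast
qed

lemma sigma_artinianE:
  fixes R (structure)
  assumes "sigma_artinian R F" "\<And>n. ideal (a n) R" "\<And>n. a (Suc n) \<subseteq> a n"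
  obtains m where "\<And>y. y \<in> a m \<Longrightarrow> \<exists>h\<in>F. \<forall>z\<in>h. y \<otimes> z \<in> a (Suc m)"
  using assms unfolding sigma_artinian_def by (metis le_SucI order_refl)

lemma (in primeideal) pow_notin:
  assumes "x \<in> carrier R" "x \<notin> I"
  shows "x [^] (n::nat) \<notin> I"
proof (induction n)
  case 0
  show ?case using I_notcarr one_imp_carrier by auto
next
  case (Suc n)
  have "x [^] n \<otimes> x \<notin> I"
    using Suc.IH assms I_prime[OF nat_pow_closed[OF assms(1)] assms(1)] by blast
  then show ?case by simp
qed

lemma prime_avoidance_Inter:
  fixes R (structure)
  assumes p: "primeideal p R" and "finite S"
    and "\<And>i. i \<in> S \<Longrightarrow> ideal (I i) R" and "\<And>i. i \<in> S \<Longrightarrow> \<not> I i \<subseteq> p"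
  shows "\<exists>y\<in>carrier R. (\<forall>i\<in>S. y \<in> I i) \<and> y \<notin> p"
  using assms(2-4)
proof (induction S rule: finite_induct)
  case empty
  interpret primeideal p R by fact
  show ?case using I_notcarr one_imp_carrier by blast
next
  case (insert j S)
  interpret primeideal p R by fact
  obtain y where y: "y \<in> carrier R" "\<forall>i\<in>S. y \<in> I i" "y \<notin> p"
    using insert by blast
  obtain w where w: "w \<in> I j" "w \<notin> p" using insert.prems by blast
  have wc: "w \<in> carrier R" using ideal.Icarr[OF insert.prems(1) w(1)] by simp
  have "y \<otimes> w \<in> I i" if "i \<in> insert j S" for i
    using that y w wc insert.prems(1) ideal.I_l_closed ideal.I_r_closed by fastforce
  moreover have "y \<otimes> w \<notin> p" using I_prime[OF y(1) wc] y(3) w(2) by blast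
  ultimately show ?case using y(1) wc by blast
qed

lemma sigma_artinian_pow_torsion:
  fixes R (structure)
  assumes "cring R" and sa: "sigma_artinian R F" and p: "ideal p R" and x: "x \<in> carrier R"
  obtains m h where "h \<in> F"
    and "\<And>z. z \<in> h \<Longrightarrow> \<exists>r\<in>carrier R. \<exists>t\<in>p. x [^] m \<otimes> z = r \<otimes> x [^] Suc m \<oplus> t"
proof -
  interpret cring R by fact
  define a where "a n = set_add R (PIdl (x [^] (n::nat))) p" for n
  have a_ideal: "ideal (a n) R" for n
    unfolding a_def by (rule add_ideals) (auto intro: cgenideal_ideal x p)
  have a_mem: "y \<in> a n \<longleftrightarrow> (\<exists>r\<in>carrier R. \<exists>t\<in>p. y = r \<otimes> x [^] n \<oplus> t)" for y n
    unfolding a_def set_add_def' cgenideal_def by blast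
  have a_dec: "a (Suc n) \<subseteq> a n" for n
  proof
    fix y assume "y \<in> a (Suc n)"
    then obtain r t where "r \<in> carrier R" "t \<in> p" "y = r \<otimes> x [^] Suc n \<oplus> t"
      unfolding a_mem by blast
    moreover from this have "y = (r \<otimes> x) \<otimes> x [^] n \<oplus> t"
      using x by (simp add: m_assoc m_comm)
    ultimately show "y \<in> a n" unfolding a_mem using x by blast
  qed
  obtain m where m: "\<And>y. y \<in> a m \<Longrightarrow> \<exists>h\<in>F. \<forall>z\<in>h. y \<otimes> z \<in> a (Suc m)"
    using sigma_artinianE[of R F a] sa a_ideal a_dec by blast
  have "x [^] m = \<one> \<otimes> x [^] m \<oplus> \<zero>" using x by simp
  then have "x [^] m \<in> a m"
    unfolding a_mem using additive_subgroup.zero_closed[OF ideal.axioms(1)[OF p]] by blast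
  then show thesis using m that unfolding a_mem by blast
qed

lemma K_sigma_incomparable:
  fixes R (structure)
  assumes gf: "gabriel_filter R F" and sa: "sigma_artinian R F"
    and p: "p \<in> K_sigma R F" and q: "q \<in> K_sigma R F" and sub: "p \<subseteq> q"
  shows "p = q"
proof (rule ccontr)
  assume "p \<noteq> q"
  then obtain x where x: "x \<in> q" "x \<notin> p" using sub by blast
  interpret P: primeideal p R using p unfolding K_sigma_def by simp
  interpret Q: primeideal q R using q unfolding K_sigma_def by simp
  have xc: "x \<in> carrier R" using x Q.Icarr by blast
  obtain m h where h: "h \<in> F"
    and torsion: "\<And>z. z \<in> h \<Longrightarrow> \<exists>r\<in>carrier R. \<exists>t\<in>p. x [^] m \<otimes> z = r \<otimes> x [^] Suc m \<oplus> t"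
    using sigma_artinian_pow_torsion[OF P.is_cring sa P.is_ideal xc] by blast
  obtain z where z: "z \<in> h" "z \<notin> q"
    using gabriel_filter_not_subset[OF gf h Q.is_ideal] q unfolding K_sigma_def by blast
  have zc: "z \<in> carrier R" using ideal.Icarr[OF gabriel_filter_ideal[OF gf h] z(1)] .
  obtain r t where rt: "r \<in> carrier R" "t \<in> p" "x [^] m \<otimes> z = r \<otimes> x [^] Suc m \<oplus> t"
    using torsion[OF z(1)] by blast
  have "x [^] m \<otimes> (z \<ominus> r \<otimes> x) = t"
  proof -
    have carr: "x [^] m \<in> carrier R" "t \<in> carrier R" using xc rt(2) P.Icarr by auto
    have "x [^] m \<otimes> (z \<ominus> r \<otimes> x) = x [^] m \<otimes> z \<ominus> r \<otimes> (x [^] m \<otimes> x)"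
      using carr xc zc rt(1) by algebra
    also have "x [^] m \<otimes> z = r \<otimes> (x [^] m \<otimes> x) \<oplus> t" using rt(3) by simp
    also have "r \<otimes> (x [^] m \<otimes> x) \<oplus> t \<ominus> r \<otimes> (x [^] m \<otimes> x) = t"
      using carr xc rt(1) by algebra
    finally show ?thesis .
  qed
  then have "z \<ominus> r \<otimes> x \<in> p"
    using P.I_prime[OF P.nat_pow_closed[OF xc] P.minus_closed[OF zc P.m_closed[OF rt(1) xc]]]
      P.pow_notin[OF xc x(2)] rt(2) by metis
  then have "(z \<ominus> r \<otimes> x) \<oplus> r \<otimes> x \<in> q"
    using sub Q.I_l_closed[OF x(1) rt(1)] Q.a_closed by blast
  moreover have "(z \<ominus> r \<otimes> x) \<oplus> r \<otimes> x = z" using zc rt(1) xc by algebra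
  ultimately show False using z(2) by simp
qed

lemma sigma_artinian_Inter_K_sigma_subset:
  fixes R (structure) and f :: "nat \<Rightarrow> 'a set"
  assumes gf: "gabriel_filter R F" and sa: "sigma_artinian R F"
    and f: "\<And>i. f i \<in> K_sigma R F"
  obtains m where "carrier R \<inter> (\<Inter>i<m. f i) \<subseteq> f m"
proof -
  have fp: "primeideal (f i) R" "f i \<notin> F" for i using f[of i] unfolding K_sigma_def by simp_all
  define a where "a n = carrier R \<inter> (\<Inter>i<n. f i)" for n :: nat
  have a_ideal: "ideal (a n) R" for n
  proof -
    interpret cring R using primeideal.axioms(2)[OF fp(1)] .
    have "a n = \<Inter> (insert (carrier R) (f ` {..<n}))" unfolding a_def by simp
    also have "ideal \<dots> R"
      by (rule i_Intersect) (auto intro: oneideal primeideal.axioms(1)[OF fp(1)])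
    finally show ?thesis .
  qed
  have a_dec: "a (Suc n) \<subseteq> a n" for n unfolding a_def by auto
  obtain m where m: "\<And>y. y \<in> a m \<Longrightarrow> \<exists>h\<in>F. \<forall>z\<in>h. y \<otimes> z \<in> a (Suc m)"
    using sigma_artinianE[of R F a] sa a_ideal a_dec by blast
  have "a m \<subseteq> f m"
  proof
    fix y assume y: "y \<in> a m"
    obtain h where h: "h \<in> F" "\<forall>z\<in>h. y \<otimes> z \<in> a (Suc m)" using m[OF y] by blast
    have "\<forall>z\<in>h. y \<otimes> z \<in> f m" using h(2) unfolding a_def by blast
    moreover have "y \<in> carrier R" using y unfolding a_def by blast
    ultimately show "y \<in> f m"
      using primeideal_torsion_closed[OF gf fp(1)[of m] fp(2)[of m] h(1)] by blast
  qed
  then show thesis unfolding a_def by (rule that)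
qed

theorem mainTheorem16:
  fixes R :: "('a, 'b) ring_scheme" and F :: "'a set set"
  assumes "cring R"
    and "gabriel_filter R F"
    and "sigma_artinian R F"
  shows "finite (K_sigma R F)"
proof (rule ccontr)
  assume "infinite (K_sigma R F)"
  then obtain f :: "nat \<Rightarrow> 'a set" where f: "inj f" "range f \<subseteq> K_sigma R F"
    using infinite_countable_subset[OF \<open>infinite (K_sigma R F)\<close>] by blast
  have fK: "f i \<in> K_sigma R F" for i using f(2) by (rule range_subsetD)
  have prime: "primeideal (f i) R" for i using fK[of i] unfolding K_sigma_def by simp
  obtain m where m: "carrier R \<inter> (\<Inter>i<m. f i) \<subseteq> f m"
    by (rule sigma_artinian_Inter_K_sigma_subset[OF assms(2,3) fK])
  have incomparable: "\<not> f i \<subseteq> f m" if "i \<in> {..<m}" for i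
  proof
    assume "f i \<subseteq> f m"
    then have "f i = f m" by (rule K_sigma_incomparable[OF assms(2,3) fK fK])
    then have "i = m" by (rule injD[OF f(1)])
    with that show False by simp
  qed
  obtain y where "y \<in> carrier R" "\<forall>i\<in>{..<m}. y \<in> f i" "y \<notin> f m"
    using prime_avoidance_Inter[of "f m" R "{..<m}" f, OF prime finite_lessThan
        primeideal.axioms(1)[OF prime] incomparable] by blast
  with m show False by blast
qed

end
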